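(* Let $k\ge 4$ and let $w$ be a minimal uncompletable word for $S_k$. Let $p$ be an occurrence of $v=b^{k-1}a$ and $q$ an occurrence of $u=ba^{k-1}$ in $w$ that are consecutive ($p$ before $q$), with sets of forbidden local positions $F_p$ and $F_q$. If $F_q=\{0,i,i+1,\dots,k-1\}$ for some $1\le i\le k-1$ and $|F_p|=|F_q|$, then the occurrences $p$ and $q$ overlap and $F_p=\{0,i-1,i,\dots,k-2\}$.
   Context: $\Sigma=\{a,b\}$. $S_k=\left(\Sigma^k\setminus\{ba^{k-1},b^{k-1}a\}\right)\cup\left(\Sigma^{k-1}\setminus\{a^{k-1},b^{k-1}\}\right)$, $u=ba^{k-1}$, $v=b^{k-1}a$. $\mathit{Fact}(S^* )$ and $\mathit{Pref}(S^* )$ are the sets of factors and of prefixes of words in $S^*$. A word $w\notin\mathit{Fact}(S_k^* )$ is uncompletable; a minimal uncompletable word is one of minimal length. For $w=w_1\cdots w_n$, $w[i..j]=w_i\cdots w_j$ (empty if $i>j$). A position $j$, $0\le j\le n-1$, is forbidden in $w$ if $w[j+1..n]\notin\mathit{Pref}(S_k^* )$. An occurrence of $p\in\{u,v\}$ in $w$ is an index $s$ with $w[s+1..s+k]=p$; local position $i\in\{0,\dots,k-1\}$ is the position $s+i$ of $w$, and it is forbidden in the occurrence if $s+i$ is forbidden in $w$. Two occurrences of words from $\{u,v\}$ starting at $s<t$ overlap if $t<s+k$; they are consecutive if either they overlap or they are the only occurrences of $u$ or $v$ lying inside the factor $w[s+1..t+k]$. *)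

theory Defs
  imports Main
begin

datatype letter = a | b

type_synonym word = "letter list"

definition Sk :: "nat \<Rightarrow> word set" where
  "Sk k = ({w. length w = k} - {b # replicate (k-1) a, replicate (k-1) b @ [a]})
        \<union> ({w. length w = k - 1} - {replicate (k-1) a, replicate (k-1) b})"

definition ustar :: "word set \<Rightarrow> word set" where
  "ustar S = {concat ws | ws. set ws \<subseteq> S}"

definition Fact :: "word set \<Rightarrow> word set" where
  "Fact L = {x. \<exists>y z. y @ x @ z \<in> L}"

definition Pref :: "word set \<Rightarrow> word set" where
  "Pref L = {x. \<exists>z. x @ z \<in> L}"

definition uncompletable :: "nat \<Rightarrow> word \<Rightarrow> bool" where
  "uncompletable k w \<longleftrightarrow> w \<notin> Fact (ustar (Sk k))"

definition minimal_uncompletable :: "nat \<Rightarrow> word \<Rightarrow> bool" where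
  "minimal_uncompletable k w \<longleftrightarrow> uncompletable k w \<and>
     (\<forall>w'. uncompletable k w' \<longrightarrow> length w \<le> length w')"

text \<open>w[i..j] with 1-based indices, empty if i > j.\<close>
definition factor :: "word \<Rightarrow> nat \<Rightarrow> nat \<Rightarrow> word" where
  "factor w i j = take (Suc j - i) (drop (i - 1) w)"

definition forbidden :: "nat \<Rightarrow> word \<Rightarrow> nat \<Rightarrow> bool" where
  "forbidden k w j \<longleftrightarrow> j < length w \<and>
     factor w (j+1) (length w) \<notin> Pref (ustar (Sk k))"

definition uu :: "nat \<Rightarrow> word" where "uu k = b # replicate (k-1) a"
definition vv :: "nat \<Rightarrow> word" where "vv k = replicate (k-1) b @ [a]"

definition occurrence :: "nat \<Rightarrow> word \<Rightarrow> word \<Rightarrow> nat \<Rightarrow> bool" where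
  "occurrence k w p s \<longleftrightarrow> s + k \<le> length w \<and> factor w (s+1) (s+k) = p"

definition forbidden_local :: "nat \<Rightarrow> word \<Rightarrow> nat \<Rightarrow> nat set" where
  "forbidden_local k w s = {i. i < k \<and> forbidden k w (s + i)}"

definition overlap :: "nat \<Rightarrow> nat \<Rightarrow> nat \<Rightarrow> bool" where
  "overlap k s t \<longleftrightarrow> t < s + k"

definition consecutive :: "nat \<Rightarrow> word \<Rightarrow> nat \<Rightarrow> nat \<Rightarrow> bool" where
  "consecutive k w s t \<longleftrightarrow> s < t \<and>
     (overlap k s t \<or>
      (\<forall>r. (occurrence k w (uu k) r \<or> occurrence k w (vv k) r) \<and> s \<le> r \<and> r + k \<le> t + k
            \<longrightarrow> r = s \<or> r = t))"

end

theory Submission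
  imports Defs
begin

(* A position y of w is forbidden iff the suffix drop y w is not a prefix of a
   word of S_k^*.  Every such prefix of length at least k starts with a block of S_k of length
   k-1 or k, so "not forbidden" propagates backwards by steps of k-1 or k through every
   position whose blocks lie in S_k; conversely a position is forbidden as soon as each of
   its two blocks is either outside S_k or leads to a forbidden position.

   First, minimality of w gives a non-forbidden position among 1..k, whence no k
   consecutive positions can all be forbidden; so i >= 2.
   If the occurrences overlap, the letters force t = s+k-2, and the backward criterion shows
   that {0} u {i-1..k-2} is forbidden in p; both sets have k-i+1 elements, so they coincide.
   If they do not overlap, no run of k-1 equal letters starts strictly between s and t, so
   all blocks starting there lie in S_k.  The i-1 non-forbidden positions t+1..t+i-1 then
   propagate back to at least i non-forbidden local positions of p, contradicting
   |F_p| = |F_q| = k-i+1. *)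

abbreviation SPref :: "nat \<Rightarrow> word set" where
  "SPref k \<equiv> Pref (ustar (Sk k))"

lemma forbidden_iff: "forbidden k w j \<longleftrightarrow> j < length w \<and> drop j w \<notin> SPref k"
  by (simp add: forbidden_def factor_def)

lemma forbidden_local_iff: "m \<in> forbidden_local k w s \<longleftrightarrow> m < k \<and> forbidden k w (s + m)"
  by (simp add: forbidden_local_def)

lemma finite_forbidden_local: "finite (forbidden_local k w s)"
  by (simp add: forbidden_local_def)

lemma occurrence_iff: "occurrence k w p s \<longleftrightarrow> s + k \<le> length w \<and> take k (drop s w) = p"
  by (simp add: occurrence_def factor_def)

lemma occurrence_iff_nth:
  assumes "length p = k"
  shows "occurrence k w p s \<longleftrightarrow> s + k \<le> length w \<and> (\<forall>q<k. w ! (s + q) = p ! q)"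
  using assms by (auto simp: occurrence_iff list_eq_iff_nth_eq)

lemma take_drop_eq_replicate_iff:
  "x + m \<le> length w \<Longrightarrow> take m (drop x w) = replicate m c \<longleftrightarrow> (\<forall>q<m. w ! (x + q) = c)"
  by (auto simp: list_eq_iff_nth_eq)

lemma length_uu: "1 \<le> k \<Longrightarrow> length (uu k) = k" by (simp add: uu_def)
lemma length_vv: "1 \<le> k \<Longrightarrow> length (vv k) = k" by (simp add: vv_def)

lemma nth_uu: "q < k \<Longrightarrow> uu k ! q = (if q = 0 then b else a)"
  by (cases q) (auto simp: uu_def)

lemma nth_vv: "q < k \<Longrightarrow> vv k ! q = (if q < k - 1 then b else a)"
  by (auto simp: vv_def nth_append)

lemma occurrence_uu_iff:
  "1 \<le> k \<Longrightarrow> occurrence k w (uu k) s \<longleftrightarrow>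
     s + k \<le> length w \<and> (\<forall>q<k. w ! (s + q) = (if q = 0 then b else a))"
  by (simp add: occurrence_iff_nth length_uu nth_uu)

lemma occurrence_vv_iff:
  "1 \<le> k \<Longrightarrow> occurrence k w (vv k) s \<longleftrightarrow>
     s + k \<le> length w \<and> (\<forall>q<k. w ! (s + q) = (if q < k - 1 then b else a))"
  by (simp add: occurrence_iff_nth length_vv nth_vv)

lemma Sk_length: "y \<in> Sk k \<Longrightarrow> length y = k \<or> length y = k - 1"
  by (auto simp: Sk_def)

lemma Sk_long_iff: "1 \<le> k \<Longrightarrow> length y = k \<Longrightarrow> y \<in> Sk k \<longleftrightarrow> y \<noteq> uu k \<and> y \<noteq> vv k"
  by (auto simp: Sk_def uu_def vv_def)

lemma Sk_short_iff:
  "1 \<le> k \<Longrightarrow> length y = k - 1 \<Longrightarrow>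
     y \<in> Sk k \<longleftrightarrow> y \<noteq> replicate (k - 1) a \<and> y \<noteq> replicate (k - 1) b"
  by (auto simp: Sk_def)

section \<open>Prefixes of S_k^*\<close>

text \<open>Every word of length at most k-1 is a prefix: pad it with b's to a block of length k,
  which cannot be u or v since those end with a.\<close>
lemma short_word_in_SPref:
  assumes "2 \<le> k" "length x \<le> k - 1"
  shows "x \<in> SPref k"
proof -
  let ?y = "x @ replicate (k - length x) b"
  have "last (uu k) = a" "last (vv k) = a" "last ?y = b"
    using assms by (auto simp: uu_def vv_def last_replicate)
  then have "?y \<noteq> uu k" "?y \<noteq> vv k" by (metis letter.distinct(1))+
  then have "?y \<in> Sk k" using assms by (subst Sk_long_iff) auto
  then have "?y \<in> ustar (Sk k)" unfolding ustar_def by (intro CollectI exI[of _ "[?y]"]) auto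
  then show ?thesis unfolding Pref_def by blast
qed

lemma block_cons_SPref: "y \<in> Sk k \<Longrightarrow> r \<in> SPref k \<Longrightarrow> y @ r \<in> SPref k"
proof -
  assume y: "y \<in> Sk k" and "r \<in> SPref k"
  then obtain z ws where "r @ z = concat ws" "set ws \<subseteq> Sk k"
    unfolding Pref_def ustar_def by blast
  then have "(y @ r) @ z = concat (y # ws)" "set (y # ws) \<subseteq> Sk k" using y by auto
  then show ?thesis unfolding Pref_def ustar_def by blast
qed

lemma SPref_split:
  assumes "x \<in> SPref k" "k \<le> length x" "2 \<le> k"
  obtains l where "l = k - 1 \<or> l = k" "take l x \<in> Sk k" "drop l x \<in> SPref k"
proof -
  obtain z ws where e: "x @ z = concat ws" and ws: "set ws \<subseteq> Sk k"
    using assms(1) unfolding Pref_def ustar_def by blast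
  obtain W ws' where ws_def: "ws = W # ws'"
    using e assms by (cases ws) auto
  have W: "W \<in> Sk k" "set ws' \<subseteq> Sk k" using ws ws_def by auto
  have lW: "length W = k \<or> length W = k - 1" using Sk_length[OF W(1)] .
  have e': "x @ z = W @ concat ws'" using e ws_def by simp
  have le: "length W \<le> length x" using lW assms by auto
  have "take (length W) x = W"
    using arg_cong[OF e', of "take (length W)"] le by simp
  moreover have "drop (length W) x @ z = concat ws'"
    using arg_cong[OF e', of "drop (length W)"] le by simp
  then have "drop (length W) x \<in> SPref k" using W(2) unfolding Pref_def ustar_def by blast
  ultimately show ?thesis using that W(1) lW by metis
qed

lemma forbidden_by_blocks:
  assumes "2 \<le> k" "y + k \<le> length w"
    and "\<And>l. l = k - 1 \<or> l = k \<Longrightarrow> take l (drop y w) \<in> Sk k \<Longrightarrow> forbidden k w (y + l)"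
  shows "forbidden k w y"
proof (rule ccontr)
  assume "\<not> forbidden k w y"
  then have "drop y w \<in> SPref k" using assms(1,2) by (simp add: forbidden_iff)
  then obtain l where "l = k - 1 \<or> l = k" "take l (drop y w) \<in> Sk k"
      "drop l (drop y w) \<in> SPref k"
    by (rule SPref_split) (use assms(1,2) in auto)
  then show False using assms(3)[of l] by (auto simp: forbidden_iff add.commute)
qed

lemma factor_suffix_in_SPref:
  assumes "2 \<le> k"
  shows "y @ x @ z = concat ws \<Longrightarrow> set ws \<subseteq> Sk k \<Longrightarrow> \<exists>c<k. drop c x \<in> SPref k"
proof (induction ws arbitrary: y)
  case Nil
  then show ?case using assms short_word_in_SPref[of k "[]"] by (intro exI[of _ 0]) auto
next
  case (Cons W ws)
  have W: "W \<in> Sk k" "set ws \<subseteq> Sk k" using Cons.prems by auto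
  have e: "y @ x @ z = W @ concat ws" using Cons.prems by simp
  show ?case
  proof (cases "length W \<le> length y")
    case True
    have "drop (length W) y @ x @ z = concat ws"
      using arg_cong[OF e, of "drop (length W)"] True by simp
    then show ?thesis using Cons.IH W(2) by blast
  next
    case False
    define c where "c = length W - length y"
    have ck: "c < k \<or> y = []"
      using Sk_length[OF W(1)] assms length_greater_0_conv[of y] unfolding c_def by linarith
    have e': "x @ z = drop (length y) W @ concat ws"
      using arg_cong[OF e, of "drop (length y)"] False by simp
    show ?thesis
    proof (cases "y = []")
      case True
      then have "x @ z = concat (W # ws)" using Cons.prems by simp
      then have "x \<in> SPref k" using Cons.prems(2) unfolding Pref_def ustar_def by blast
      then show ?thesis using assms by (intro exI[of _ 0]) auto
    next
      case False
      show ?thesis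
      proof (cases "c \<le> length x")
        case True
        have "drop c x @ z = concat ws"
          using arg_cong[OF e', of "drop c"] True by (simp add: c_def)
        then have "drop c x \<in> SPref k" using W(2) unfolding Pref_def ustar_def by blast
        then show ?thesis using ck False by blast
      next
        case False
        then show ?thesis using ck \<open>y \<noteq> []\<close> short_word_in_SPref[of k "[]"] assms by auto
      qed
    qed
  qed
qed

section \<open>No window of k forbidden positions\<close>

text \<open>Minimality: deleting the first letter gives a completable word, so some position
  among 1..k is not forbidden.\<close>
lemma minimal_uncompletable_free_position:
  assumes "minimal_uncompletable k w" "2 \<le> k"
  obtains x where "1 \<le> x" "x \<le> k" "\<not> forbidden k w x"
proof -
  have "[] \<in> Fact (ustar (Sk k))" unfolding Fact_def ustar_def
    by (auto intro!: exI[of _ "[]"])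
  then have "w \<noteq> []" using assms(1) unfolding minimal_uncompletable_def uncompletable_def by auto
  then have "length (tl w) < length w" by simp
  then have "\<not> uncompletable k (tl w)"
    using assms(1) unfolding minimal_uncompletable_def by (meson not_less)
  then obtain y z ws where "y @ tl w @ z = concat ws" "set ws \<subseteq> Sk k"
    unfolding uncompletable_def Fact_def ustar_def by blast
  then obtain c where "c < k" "drop c (tl w) \<in> SPref k"
    using factor_suffix_in_SPref[OF assms(2)] by blast
  then show ?thesis using that[of "Suc c"] by (auto simp: forbidden_iff drop_Suc)
qed

text \<open>If k consecutive positions starting at j are forbidden, so is every earlier one:
  any first block from an earlier position lands before j or inside the window.\<close>
lemma forbidden_window_propagates:
  assumes win: "\<forall>l<k. forbidden k w (j + l)" and k: "2 \<le> k"
  shows "y < j \<Longrightarrow> forbidden k w y"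
proof (induction "j - y" arbitrary: y rule: less_induct)
  case less
  have "j + (k - 1) < length w" using win[rule_format, of "k - 1"] k by (simp add: forbidden_iff)
  then have len: "y + k \<le> length w" using less.prems by simp
  show ?case
  proof (rule forbidden_by_blocks[OF k len])
    fix l assume l: "l = k - 1 \<or> l = k"
    show "forbidden k w (y + l)"
    proof (cases "y + l < j")
      case True
      then show ?thesis using less.hyps less.prems l k by auto
    next
      case False
      then have "y + l = j + (y + l - j)" "y + l - j < k" using l less.prems k by auto
      then show ?thesis using win by metis
    qed
  qed
qed

lemma minimal_uncompletable_no_forbidden_window:
  assumes "minimal_uncompletable k w" "2 \<le> k" "1 \<le> j"
  shows "\<not> (\<forall>l<k. forbidden k w (j + l))"
proof
  assume win: "\<forall>l<k. forbidden k w (j + l)"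
  obtain x where x: "1 \<le> x" "x \<le> k" "\<not> forbidden k w x"
    using minimal_uncompletable_free_position[OF assms(1,2)] .
  show False
  proof (cases "x < j")
    case True
    then show False using forbidden_window_propagates[OF win assms(2)] x(3) by blast
  next
    case False
    then have "x = j + (x - j)" "x - j < k" using x assms(3) by auto
    then show False using win x(3) by metis
  qed
qed

section \<open>Overlapping occurrences\<close>

lemma overlap_start:
  assumes k: "3 \<le> k" and "occurrence k w (vv k) s" "occurrence k w (uu k) t"
    and st: "s < t" "t < s + k"
  shows "t = s + k - 2"
proof -
  have V: "\<And>q. q < k \<Longrightarrow> w ! (s + q) = (if q < k - 1 then b else a)"
   and U: "\<And>q. q < k \<Longrightarrow> w ! (t + q) = (if q = 0 then b else a)"
    using assms by (auto simp: occurrence_uu_iff occurrence_vv_iff)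
  have "t \<noteq> s + (k - 1)" using V[of "k - 1"] U[of 0] k by auto
  moreover have "\<not> t + 1 < s + (k - 1)"
  proof
    assume "t + 1 < s + (k - 1)"
    then have "w ! (t + 1) = b" using V[of "t + 1 - s"] st by simp
    then show False using U[of 1] k by simp
  qed
  ultimately show ?thesis using st k by linarith
qed

text \<open>With t = s+k-2, the forbidden positions i..k-1 of q reappear, shifted by k-2, in p,
  and local position 0 of p is forbidden because both blocks starting there are excluded.\<close>
lemma overlap_forbidden_local:
  assumes k: "3 \<le> k" "1 \<le> i"
    and V: "occurrence k w (vv k) s" and U: "occurrence k w (uu k) (s + k - 2)"
    and Fq: "\<And>l. i \<le> l \<Longrightarrow> l < k \<Longrightarrow> forbidden k w (s + k - 2 + l)"
  shows "{0} \<union> {i - 1..k - 2} \<subseteq> forbidden_local k w s"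
proof -
  have len: "s + 2 * k - 2 \<le> length w" using U k by (auto simp: occurrence_iff)
  have "take (k - 1) (drop s w) = replicate (k - 1) b"
    using V k by (subst take_drop_eq_replicate_iff) (auto simp: occurrence_vv_iff)
  moreover have "take k (drop s w) = vv k" using V by (simp add: occurrence_iff)
  ultimately have "forbidden k w s"
    using k len forbidden_by_blocks[of k s w] Sk_short_iff Sk_long_iff length_vv by force
  moreover have "forbidden k w (s + m)" if m: "i - 1 \<le> m" "m \<le> k - 2" for m
  proof (rule forbidden_by_blocks)
    show "2 \<le> k" "s + m + k \<le> length w" using k m len by auto
    fix l assume l: "l = k - 1 \<or> l = k" and blk: "take l (drop (s + m) w) \<in> Sk k"
    show "forbidden k w (s + m + l)"
    proof (cases "l = k \<and> m = k - 2")
      case True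
      then have "take l (drop (s + m) w) = uu k" using U k by (simp add: occurrence_iff)
      then show ?thesis using blk True Sk_long_iff length_uu k by force
    next
      case False
      then have "s + m + l = s + k - 2 + (m + l + 2 - k)" "i \<le> m + l + 2 - k" "m + l + 2 - k < k"
        using l m k by auto
      then show ?thesis using Fq by metis
    qed
  qed
  ultimately show ?thesis using k by (auto simp: forbidden_local_iff)
qed

lemma overlap_forbidden_local_eq:
  assumes k: "3 \<le> k" and i: "2 \<le> i" "i \<le> k - 1"
    and V: "occurrence k w (vv k) s" and U: "occurrence k w (uu k) (s + k - 2)"
    and Fq: "\<And>l. i \<le> l \<Longrightarrow> l < k \<Longrightarrow> forbidden k w (s + k - 2 + l)"
    and card_Fp: "card (forbidden_local k w s) = k - i + 1"
  shows "forbidden_local k w s = {0} \<union> {i - 1..k - 2}"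
proof (rule sym, rule card_subset_eq[OF finite_forbidden_local])
  show "{0} \<union> {i - 1..k - 2} \<subseteq> forbidden_local k w s"
    by (rule overlap_forbidden_local) (use k i V U Fq in auto)
  show "card ({0} \<union> {i - 1..k - 2}) = card (forbidden_local k w s)"
    using card_Fp k i by simp
qed

section \<open>Non-overlapping consecutive occurrences\<close>

locale uv_gap =
  fixes k :: nat and w :: word and s t :: nat
  assumes k3: "3 \<le> k"
    and occ_v: "occurrence k w (vv k) s"
    and occ_u: "occurrence k w (uu k) t"
    and s_less_t: "s < t"
    and no_inner: "\<And>r. s < r \<Longrightarrow> r < t \<Longrightarrow>
                     \<not> occurrence k w (uu k) r \<and> \<not> occurrence k w (vv k) r"
begin

lemma end_t: "t + k \<le> length w"
  using occ_u by (simp add: occurrence_iff)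

lemma letter_s: "q < k \<Longrightarrow> w ! (s + q) = (if q < k - 1 then b else a)"
  using occ_v k3 by (simp add: occurrence_vv_iff)

lemma letter_t: "q < k \<Longrightarrow> w ! (t + q) = (if q = 0 then b else a)"
  using occ_u k3 by (simp add: occurrence_uu_iff)

text \<open>A run a^(k-1) starting in the gap would extend backwards (letter a), create an
  occurrence of u (letter b), or finally meet the b at position s+1.\<close>
lemma no_a_run: "s < x \<Longrightarrow> x < t \<Longrightarrow> \<not> (\<forall>q<k - 1. w ! (x + q) = a)"
proof (induction x)
  case 0
  then show ?case by simp
next
  case (Suc x)
  show ?case
  proof
    assume A: "\<forall>q<k - 1. w ! (Suc x + q) = a"
    show False
    proof (cases "x = s")
      case True
      moreover have "1 < k - 1" using k3 by simp
      ultimately show False using A[rule_format, of 0] letter_s[of 1] k3 by simp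
    next
      case False
      then have sx: "s < x" "x < t" using Suc.prems by auto
      have rest: "w ! (x + q) = a" if "1 \<le> q" "q < k" for q
        using A[rule_format, of "q - 1"] that by simp
      show False
      proof (cases "w ! x")
        case a
        have "\<forall>q<k - 1. w ! (x + q) = a"
        proof (intro allI impI)
          fix q assume "q < k - 1"
          then show "w ! (x + q) = a" using rest[of q] \<open>w ! x = a\<close> by (cases "q = 0") auto
        qed
        then show False using Suc.IH sx by blast
      next
        case b
        then have "w ! (x + q) = (if q = 0 then b else a)" if "q < k" for q
          using rest[of q] that by simp
        then have "occurrence k w (uu k) x"
          using sx end_t k3 by (simp add: occurrence_uu_iff)
        then show False using no_inner sx by blast
      qed
    qed
  qed
qed

text \<open>A run b^(k-1) starting in the gap would extend forwards (letter b), create an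
  occurrence of v (letter a), or finally meet the a at position t+1.\<close>
lemma no_b_run: "s < x \<Longrightarrow> x < t \<Longrightarrow> \<not> (\<forall>q<k - 1. w ! (x + q) = b)"
proof (induction "t - x" arbitrary: x rule: less_induct)
  case less
  show ?case
  proof
    assume B: "\<forall>q<k - 1. w ! (x + q) = b"
    show False
    proof (cases "w ! (x + (k - 1))")
      case a
      have "w ! (x + q) = (if q < k - 1 then b else a)" if "q < k" for q
      proof -
        have "q < k - 1 \<or> q = k - 1" using that by linarith
        then show ?thesis using B a by auto
      qed
      then have "occurrence k w (vv k) x"
        using less.prems end_t k3 by (simp add: occurrence_vv_iff)
      then show False using no_inner less.prems by blast
    next
      case b
      have B': "\<forall>q<k - 1. w ! (Suc x + q) = b"
      proof (intro allI impI)
        fix q assume q: "q < k - 1"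
        show "w ! (Suc x + q) = b"
        proof (cases "Suc q < k - 1")
          case True
          then show ?thesis using B[rule_format, of "Suc q"] by simp
        next
          case False
          then have "Suc x + q = x + (k - 1)" using q by linarith
          then show ?thesis using b by metis
        qed
      qed
      show False
      proof (cases "Suc x = t")
        case True
        then show False using B'[rule_format, of 1] letter_t[of 1] k3 by simp
      next
        case False
        then have "t - Suc x < t - x" "s < Suc x" "Suc x < t" using less.prems by auto
        then show False using less.hyps B' by blast
      qed
    qed
  qed
qed

lemma gap_block_in_Sk:
  assumes "s < y" "y < t" "l = k - 1 \<or> l = k"
  shows "take l (drop y w) \<in> Sk k"
proof -
  have len: "y + k \<le> length w" using assms end_t by simp
  show ?thesis
  proof (cases "l = k")
    case True
    then show ?thesis using no_inner[OF assms(1,2)] len k3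
      by (subst Sk_long_iff) (auto simp: occurrence_iff)
  next
    case False
    then have "l = k - 1" using assms(3) by simp
    moreover have "take (k - 1) (drop y w) \<noteq> replicate (k - 1) c" for c
      using no_a_run[OF assms(1,2)] no_b_run[OF assms(1,2)] len
      by (cases c) (auto simp: take_drop_eq_replicate_iff)
    ultimately show ?thesis using len k3 by (subst Sk_short_iff) auto
  qed
qed

lemma gap_reach:
  assumes z: "drop z w \<in> SPref k" "z + 2 \<le> t + k"
  shows "s < y \<Longrightarrow> y + j * (k - 1) \<le> z \<Longrightarrow> z \<le> y + j * k \<Longrightarrow> drop y w \<in> SPref k"
proof (induction j arbitrary: y)
  case 0
  then show ?case using z by simp
next
  case (Suc j)
  have "k - 1 \<le> Suc j * (k - 1)" by simp
  then have yt: "y < t" using Suc.prems z k3 by linarith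
  define l where "l = (if y + k + j * (k - 1) \<le> z then k else k - 1)"
  have l: "l = k - 1 \<or> l = k" by (simp add: l_def)
  have "j * (k - 1) \<le> j * k" by simp
  then have "drop (y + l) w \<in> SPref k"
    using Suc.prems k3 by (intro Suc.IH) (auto simp: l_def algebra_simps)
  then have "take l (drop y w) @ drop l (drop y w) \<in> SPref k"
    using block_cons_SPref[OF gap_block_in_Sk[OF Suc.prems(1) yt l]] by (simp add: add.commute)
  then show ?case by (metis append_take_drop_id)
qed

end

lemma consecutive_uv_gap:
  assumes "3 \<le> k" "occurrence k w (vv k) s" "occurrence k w (uu k) t"
    and cons: "consecutive k w s t" and "\<not> overlap k s t"
  shows "uv_gap k w s t"
proof
  have between: "\<forall>r. (occurrence k w (uu k) r \<or> occurrence k w (vv k) r) \<and> s \<le> r \<and> r + k \<le> t + k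
      \<longrightarrow> r = s \<or> r = t"
    using cons assms(5) unfolding consecutive_def by blast
  show "\<not> occurrence k w (uu k) r \<and> \<not> occurrence k w (vv k) r" if "s < r" "r < t" for r
    using between[rule_format, of r] that by auto
  show "s < t" using cons by (simp add: consecutive_def)
qed (use assms in auto)

text \<open>With t-s = j0*k + r, the offsets r+1..min(r+i)(k-1) use j0 steps and
  the offsets 1..r+i+1-k use j0+1 steps.\<close>
lemma many_offsets_reach_window:
  fixes s t k i :: nat
  assumes st: "s + k \<le> t" and i: "2 \<le> i" "i \<le> k - 1"
  shows "i \<le> card {m \<in> {1..<k}. \<exists>j z. t < z \<and> z < t + i \<and> s + m + j * (k - 1) \<le> z \<and> z \<le> s + m + j * k}"
    (is "_ \<le> card ?R")
proof -
  define j0 where "j0 = (t - s) div k"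
  define r where "r = (t - s) mod k"
  have k: "0 < k" using i by simp
  have t_eq: "t = s + j0 * k + r" using st unfolding j0_def r_def by simp
  have rk: "r < k" using k by (simp add: r_def)
  have "k div k \<le> (t - s) div k" using st by (intro div_le_mono) simp
  then have j0: "1 \<le> j0" using k by (simp add: j0_def)
  have steps: "j * (k - 1) = j * k - j" "j \<le> j * k" for j :: nat
    using k by (simp_all add: diff_mult_distrib2)
  define A1 where "A1 = {r + 1..min (r + i) (k - 1)}"
  define A2 where "A2 = {1..r + i + 1 - k}"
  have "A1 \<subseteq> ?R"
  proof
    fix m assume m: "m \<in> A1"
    let ?z = "min (t - r + m) (t + i - 1)"
    have "m \<in> {1..<k}" using m i unfolding A1_def by auto
    moreover have "t < ?z \<and> ?z < t + i \<and> s + m + j0 * (k - 1) \<le> ?z \<and> ?z \<le> s + m + j0 * k"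
      using m t_eq j0 i steps[of j0] unfolding A1_def by auto
    ultimately show "m \<in> ?R" by blast
  qed
  moreover have "A2 \<subseteq> ?R"
  proof
    fix m assume m: "m \<in> A2"
    let ?z = "min (t - r + m + k) (t + i - 1)"
    have "m \<in> {1..<k}" using m rk i unfolding A2_def by auto
    moreover have "t < ?z \<and> ?z < t + i \<and> s + m + Suc j0 * (k - 1) \<le> ?z \<and> ?z \<le> s + m + Suc j0 * k"
      using m t_eq j0 i rk steps[of "Suc j0"] unfolding A2_def by auto
    ultimately show "m \<in> ?R" by blast
  qed
  ultimately have "A1 \<union> A2 \<subseteq> ?R" by blast
  then have "card (A1 \<union> A2) \<le> card ?R"
    by (intro card_mono[OF finite_subset[of _ "{1..<k}"]]) auto
  moreover have "card (A1 \<union> A2) = card A1 + card A2"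
    using i unfolding A1_def A2_def by (intro card_Un_disjoint) auto
  moreover have "card A1 + card A2 = i"
    using rk i unfolding A1_def A2_def by (cases "r + i \<le> k - 1") auto
  ultimately show ?thesis by simp
qed

text \<open>In the non-overlapping case p has at most k-i forbidden local positions, because the
  non-forbidden positions t+1..t+i-1 of q propagate back to i offsets of p.\<close>
lemma (in uv_gap) forbidden_local_card_bound:
  assumes st: "s + k \<le> t" and i: "2 \<le> i" "i \<le> k - 1"
    and free: "\<And>l. 1 \<le> l \<Longrightarrow> l < i \<Longrightarrow> \<not> forbidden k w (t + l)"
  shows "card (forbidden_local k w s) \<le> k - i"
proof -
  let ?R = "{m \<in> {1..<k}. \<exists>j z. t < z \<and> z < t + i \<and> s + m + j * (k - 1) \<le> z \<and> z \<le> s + m + j * k}"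
  have free_s: "\<not> forbidden k w (s + m)" if m: "m \<in> ?R" for m
  proof -
    obtain j z where z: "t < z" "z < t + i" "s + m + j * (k - 1) \<le> z" "z \<le> s + m + j * k"
      using m by blast
    have "z = t + (z - t)" "1 \<le> z - t" "z - t < i" using z by auto
    then have "drop z w \<in> SPref k" using free[of "z - t"] end_t i by (auto simp: forbidden_iff)
    moreover have "z + 2 \<le> t + k" "s < s + m" using z i m by auto
    ultimately have "drop (s + m) w \<in> SPref k"
      using gap_reach[of z "s + m" j] z by blast
    then show ?thesis by (simp add: forbidden_iff)
  qed
  have "forbidden_local k w s \<subseteq> {..<k} - ?R"
  proof
    fix m assume "m \<in> forbidden_local k w s"
    then have "m < k" "forbidden k w (s + m)" by (simp_all add: forbidden_local_iff)
    then show "m \<in> {..<k} - ?R" using free_s[of m] by blast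
  qed
  then have "card (forbidden_local k w s) \<le> card ({..<k} - ?R)" by (intro card_mono) auto
  also have "card ({..<k} - ?R) = k - card ?R"
    by (subst card_Diff_subset) (auto intro: finite_subset[of _ "{..<k}"])
  finally show ?thesis using many_offsets_reach_window[OF st i] by simp
qed

theorem lemma6:
  fixes k :: nat and w :: word and s t i :: nat
  assumes "k \<ge> 4"
    and "minimal_uncompletable k w"
    and "occurrence k w (vv k) s"
    and "occurrence k w (uu k) t"
    and "consecutive k w s t"
    and "1 \<le> i" and "i \<le> k - 1"
    and "forbidden_local k w t = {0} \<union> {i..k-1}"
    and "card (forbidden_local k w s) = card (forbidden_local k w t)"
  shows "overlap k s t \<and> forbidden_local k w s = {0} \<union> {i-1..k-2}"
proof -
  have st: "s < t" using assms(5) by (simp add: consecutive_def)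
  have Ft: "forbidden k w (t + l) \<longleftrightarrow> l = 0 \<or> i \<le> l" if "l < k" for l
    using assms(8) that forbidden_local_iff[of l k w t] by auto
  have card_Fp: "card (forbidden_local k w s) = k - i + 1"
    using assms(6,7,8,9) by simp
  have i2: "2 \<le> i"
  proof (rule ccontr)
    assume "\<not> 2 \<le> i"
    then have "\<forall>l<k. forbidden k w (t + l)" using Ft assms(6) by auto
    then show False
      using minimal_uncompletable_no_forbidden_window[OF assms(2)] assms(1) st by auto
  qed
  show ?thesis
  proof (cases "overlap k s t")
    case True
    then have t: "t = s + k - 2"
      using overlap_start assms(1,3,4) st by (simp add: overlap_def)
    then show ?thesis
      using True overlap_forbidden_local_eq[of k i w s] assms(1,3,4,7) i2 Ft card_Fp by simp
  next
    case False
    then interpret uv_gap k w s t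
      using consecutive_uv_gap assms(1,3,4,5) by simp
    have "card (forbidden_local k w s) \<le> k - i"
      using False i2 assms(7) Ft
      by (intro forbidden_local_card_bound) (auto simp: overlap_def)
    then show ?thesis using card_Fp assms(7) i2 by simp
  qed
qed

end
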